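(* Let $\mathbb{F}$ be a field, $d\geq1$ and $V$ a vector space over $\mathbb{F}$ of dimension $d+1$. Let $E^*_0,\dots,E^*_d$ be a system of mutually orthogonal idempotents in $\mathrm{End}(V)$ and $A\in\mathrm{End}(V)$ with $E^*_iAE^*_j=0$ if $|i-j|>1$ and $E^*_iAE^*_j\neq0$ if $|i-j|=1$. Assume $A$ is multiplicity-free and bipartite, with primitive idempotents $E_0,\dots,E_d$ and corresponding eigenvalues $\theta_0,\dots,\theta_d$. Let $\theta^*_0,\dots,\theta^*_d\in\mathbb{F}$ and $A^*=\sum_i\theta^*_iE^*_i$. If $(A;\{E_i\}_{i=0}^d;A^*;\{E^*_i\}_{i=0}^d)$ is a Leonard system, then for $0\le i\le d$, $\theta_i=0$ if and only if $d$ is even and $i=d/2$.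
   Context: A system of mutually orthogonal idempotents: $E^*_iE^*_j=\delta_{ij}E^*_i$, $\operatorname{rank}E^*_i=1$. $A$ multiplicity-free: $d+1$ distinct eigenvalues in $\mathbb{F}$; $E_i$ is the projection onto the $\theta_i$-eigenspace along the other eigenspaces. Bipartite: $\operatorname{tr}(E^*_iA)=0$ for all $i$. A Leonard system on $V$ is a sequence $(A;\{E_i\};A^*;\{E^*_i\})$ such that $A$ and $A^*$ are multiplicity-free, $E_0,\dots,E_d$ is an ordering of the primitive idempotents of $A$, $E^*_0,\dots,E^*_d$ is an ordering of the primitive idempotents of $A^*$, $E^*_iAE^*_j$ is $0$ if $|i-j|>1$ and nonzero if $|i-j|=1$, and $E_iA^*E_j$ is $0$ if $|i-j|>1$ and nonzero if $|i-j|=1$. *)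

theory Defs
  imports "Jordan_Normal_Form.DL_Rank" "Jordan_Normal_Form.Char_Poly"
begin

text \<open>End(V) for dim V = d+1 is represented by (d+1) x (d+1) matrices over the field.\<close>

definition mat_trace :: "'a::comm_ring_1 mat \<Rightarrow> 'a" where
  "mat_trace M = (\<Sum>i<dim_row M. M $$ (i, i))"

definition orth_idempotent_system :: "nat \<Rightarrow> (nat \<Rightarrow> 'a::field mat) \<Rightarrow> bool" where
  "orth_idempotent_system d Es \<longleftrightarrow>
     (\<forall>i\<le>d. Es i \<in> carrier_mat (d+1) (d+1) \<and> vec_space.rank (d+1) (Es i) = 1) \<and>
     (\<forall>i\<le>d. \<forall>j\<le>d. Es i * Es j = (if i = j then Es i else 0\<^sub>m (d+1) (d+1)))"

text \<open>A is multiplicity-free with eigenvalues th 0, ..., th d (distinct) and E i is the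
  projection onto the th i-eigenspace along the other eigenspaces.\<close>
definition mult_free_with :: "nat \<Rightarrow> 'a::field mat \<Rightarrow> (nat \<Rightarrow> 'a) \<Rightarrow> (nat \<Rightarrow> 'a mat) \<Rightarrow> bool" where
  "mult_free_with d A th E \<longleftrightarrow>
     A \<in> carrier_mat (d+1) (d+1) \<and>
     inj_on th {0..d} \<and> (\<forall>i\<le>d. eigenvalue A (th i)) \<and>
     (\<forall>i\<le>d. E i \<in> carrier_mat (d+1) (d+1) \<and>
        (\<forall>j\<le>d. \<forall>v\<in>carrier_vec (d+1). A *\<^sub>v v = th j \<cdot>\<^sub>v v \<longrightarrow>
            E i *\<^sub>v v = (if i = j then v else 0\<^sub>v (d+1))))"

definition prim_idempotents :: "nat \<Rightarrow> 'a::field mat \<Rightarrow> (nat \<Rightarrow> 'a mat) \<Rightarrow> bool" where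
  "prim_idempotents d A E \<longleftrightarrow> (\<exists>th. mult_free_with d A th E)"

definition bipartite :: "nat \<Rightarrow> 'a::field mat \<Rightarrow> (nat \<Rightarrow> 'a mat) \<Rightarrow> bool" where
  "bipartite d A Es \<longleftrightarrow> (\<forall>i\<le>d. mat_trace (Es i * A) = 0)"

definition tridiag_wrt :: "nat \<Rightarrow> 'a::field mat \<Rightarrow> (nat \<Rightarrow> 'a mat) \<Rightarrow> bool" where
  "tridiag_wrt d A Es \<longleftrightarrow>
     (\<forall>i\<le>d. \<forall>j\<le>d.
        (1 < \<bar>int i - int j\<bar> \<longrightarrow> Es i * A * Es j = 0\<^sub>m (d+1) (d+1)) \<and>
        (\<bar>int i - int j\<bar> = 1 \<longrightarrow> Es i * A * Es j \<noteq> 0\<^sub>m (d+1) (d+1)))"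

definition leonard_system ::
  "nat \<Rightarrow> 'a::field mat \<Rightarrow> (nat \<Rightarrow> 'a mat) \<Rightarrow> 'a mat \<Rightarrow> (nat \<Rightarrow> 'a mat) \<Rightarrow> bool" where
  "leonard_system d A E As Es \<longleftrightarrow>
     prim_idempotents d A E \<and> prim_idempotents d As Es \<and>
     tridiag_wrt d A Es \<and> tridiag_wrt d As E"

definition lin_comb_mat :: "nat \<Rightarrow> (nat \<Rightarrow> 'a::field) \<Rightarrow> (nat \<Rightarrow> 'a mat) \<Rightarrow> 'a mat" where
  "lin_comb_mat d c M = mat (d+1) (d+1) (\<lambda>(r, s). \<Sum>i\<le>d. c i * M i $$ (r, s))"

end

theory Submission
  imports Defs
begin

text \<open>The sign matrix \<open>D = \<Sum>\<^sub>i (-1)\<^sup>i E\<^sup>*\<^sub>i\<close> is an involution. Since every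
  \<open>E\<^sup>*\<^sub>i\<close> has rank one, \<open>E\<^sup>*\<^sub>i A E\<^sup>*\<^sub>i = tr(E\<^sup>*\<^sub>i A) E\<^sup>*\<^sub>i = 0\<close>, so \<open>A\<close> only links
  adjacent \<open>E\<^sup>*\<^sub>i\<close> and \<open>D A D = -A\<close>. Hence \<open>D\<close> maps the \<open>\<theta>\<^sub>i\<close>-eigenspace onto the
  \<open>-\<theta>\<^sub>i\<close>-eigenspace: there is a permutation \<open>\<sigma>\<close> with \<open>\<theta>\<^sub>\<sigma>\<^sub>i = -\<theta>\<^sub>i\<close> and
  \<open>D E\<^sub>\<sigma>\<^sub>i D = E\<^sub>i\<close>. As \<open>D\<close> commutes with \<open>A\<^sup>*\<close>, conjugation by \<open>D\<close> shows that \<open>\<sigma>\<close>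
  preserves the tridiagonal pattern of the \<open>E\<^sub>i A\<^sup>* E\<^sub>j\<close>, so \<open>\<sigma>\<close> is an automorphism of the
  path \<open>0, 1, \<dots>, d\<close>. The identity is impossible, as it would force \<open>\<theta>\<^sub>0 = \<theta>\<^sub>1 = 0\<close>
  (characteristic two being excluded separately). So \<open>\<theta>\<^sub>d\<^sub>-\<^sub>i = -\<theta>\<^sub>i\<close>, and by
  distinctness \<open>\<theta>\<^sub>i = 0\<close> exactly when \<open>d - i = i\<close>.\<close>

lemma index_mult_mat_sum:
  assumes "X \<in> carrier_mat n m" "Y \<in> carrier_mat m p" "i < n" "j < p"
  shows "(X * Y) $$ (i, j) = (\<Sum>k<m. X $$ (i, k) * Y $$ (k, j))"
  using assms by (simp add: scalar_prod_def atLeast0LessThan)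

lemma index_mult_mat_vec_sum:
  assumes "X \<in> carrier_mat n m" "v \<in> carrier_vec m" "i < n"
  shows "(X *\<^sub>v v) $ i = (\<Sum>k<m. X $$ (i, k) * v $ k)"
  using assms by (simp add: scalar_prod_def atLeast0LessThan)

lemma mult_carrier_square_mat [simp]:
  "A \<in> carrier_mat n n \<Longrightarrow> B \<in> carrier_mat n n \<Longrightarrow> A * B \<in> carrier_mat n n"
  by (rule mult_carrier_mat)

lemma assoc_mult_square_mat:
  "A \<in> carrier_mat n n \<Longrightarrow> B \<in> carrier_mat n n \<Longrightarrow> C \<in> carrier_mat n n \<Longrightarrow>
   A * B * C = A * (B * C)"
  by (rule assoc_mult_mat)

lemma smult_vec_eq_zero:
  fixes a :: "'a::field"
  assumes "a \<cdot>\<^sub>v v = 0\<^sub>v n" "v \<in> carrier_vec n" "v \<noteq> 0\<^sub>v n"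
  shows "a = 0"
proof -
  obtain i where "i < n" "v $ i \<noteq> 0"
    using assms(2,3) by (metis carrier_vecD eq_vecI index_zero_vec(1,2))
  moreover have "a * v $ i = 0"
    using arg_cong[OF assms(1), of "\<lambda>w. w $ i"] \<open>i < n\<close> assms(2) by simp
  ultimately show ?thesis by simp
qed

lemma (in vec_space) rank_one_factorization:
  assumes E: "E \<in> carrier_mat n nc" and rank: "rank E = 1"
  obtains u g where "u \<in> carrier_vec n" "\<And>r c. r < n \<Longrightarrow> c < nc \<Longrightarrow> E $$ (r, c) = u $ r * g c"
proof -
  have "lin_indpt {}"
    by (metis empty_subsetI fin_dim finite_basis_exists subset_li_is_li vec_vs vectorspace.basis_def)
  then obtain S where S: "finite S" "maximal S (\<lambda>T. T \<subseteq> set (cols E) \<and> lin_indpt T)"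
    using maximal_exists_superset[of "set (cols E)" "\<lambda>T. T \<subseteq> set (cols E) \<and> lin_indpt T" "{}"]
    by auto
  have "card S = 1" using rank_card_indpt[OF E S(2)] rank by simp
  then obtain u where Su: "S = {u}" using card_1_singletonE by blast
  have u_col: "u \<in> set (cols E)" and u_indpt: "lin_indpt {u}"
    using S(2) Su unfolding maximal_def by auto
  have cols_carrier: "set (cols E) \<subseteq> carrier_vec n" using E cols_dim by blast
  have u: "u \<in> carrier_vec n" using u_col cols_carrier by auto
  have col_in_span: "w \<in> span {u}" if w: "w \<in> set (cols E)" for w
  proof (cases "w = u")
    case True
    then show ?thesis using span_self u by auto
  next
    case False
    have "\<not> lin_indpt ({u} \<union> {w})"
    proof
      assume "lin_indpt ({u} \<union> {w})"
      then have "{u} \<union> {w} = S" using S(2) Su w u_col unfolding maximal_def by auto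
      then show False using False Su by auto
    qed
    then show ?thesis
      using lin_dep_iff_in_span[of "{u}" w] u_indpt u w cols_carrier False by auto
  qed
  have "\<exists>a. \<forall>r<n. col E c $ r = a * u $ r" if c: "c < nc" for c
  proof -
    have "col E c \<in> span {u}" using c E by (intro col_in_span) (simp add: cols_def)
    then obtain a where "lincomb a {u} = col E c" using finite_in_span[of "{u}" "col E c"] u by auto
    moreover have "lincomb a {u} $ r = a u * u $ r" if "r < n" for r
      using lincomb_index[of r "{u}" a] u that by simp
    ultimately show ?thesis by metis
  qed
  then obtain g where "\<forall>c<nc. \<forall>r<n. col E c $ r = g c * u $ r" by metis
  with u E show ?thesis by (intro that[of u g]) (auto simp: mult.commute)
qed

lemma rank_one_sandwich:
  fixes M :: "'a::field mat"
  assumes M: "M \<in> carrier_mat n n" and X: "X \<in> carrier_mat n n"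
    and X_entry: "\<And>r c. r < n \<Longrightarrow> c < n \<Longrightarrow> X $$ (r, c) = u $ r * g c"
  shows "X * M * X = mat_trace (X * M) \<cdot>\<^sub>m X"
proof (rule eq_matI)
  fix r c assume "r < dim_row (mat_trace (X * M) \<cdot>\<^sub>m X)" "c < dim_col (mat_trace (X * M) \<cdot>\<^sub>m X)"
  then have r: "r < n" and c: "c < n" using X by auto
  define \<kappa> where "\<kappa> = (\<Sum>q<n. \<Sum>p<n. g p * M $$ (p, q) * u $ q)"
  have "(X * M * X) $$ (r, c) = (\<Sum>q<n. (\<Sum>p<n. X $$ (r, p) * M $$ (p, q)) * X $$ (q, c))"
    using index_mult_mat_sum[of "X * M" n n X n r c] index_mult_mat_sum[of X n n M n] X M r c
    by simp
  also have "\<dots> = u $ r * g c * \<kappa>"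
    unfolding \<kappa>_def sum_distrib_left using r c X_entry
    by (intro sum.cong refl) (simp add: sum_distrib_right sum_distrib_left ac_simps)
  finally have "(X * M * X) $$ (r, c) = u $ r * g c * \<kappa>" .
  moreover have "mat_trace (X * M) = \<kappa>"
    unfolding mat_trace_def \<kappa>_def using index_mult_mat_sum[of X n n M n] X M X_entry
    by (simp add: ac_simps)
  ultimately show "(X * M * X) $$ (r, c) = (mat_trace (X * M) \<cdot>\<^sub>m X) $$ (r, c)"
    using r c X X_entry by (simp add: ac_simps)
qed (use X M in auto)

lemma smult_mat_mult_vec:
  "A \<in> carrier_mat nr nc \<Longrightarrow> v \<in> carrier_vec nc \<Longrightarrow> (a \<cdot>\<^sub>m A) *\<^sub>v v = (a::'a::comm_ring_1) \<cdot>\<^sub>v (A *\<^sub>v v)"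
  by (intro eq_vecI) (auto simp: scalar_prod_def sum_distrib_left ac_simps)

lemma mult_mat_vec_zero: "A \<in> carrier_mat nr nc \<Longrightarrow> A *\<^sub>v 0\<^sub>v nc = (0\<^sub>v nr :: 'a::semiring_0 vec)"
  by (intro eq_vecI) (auto simp: scalar_prod_def)

lemma zero_mat_mult_vec: "v \<in> carrier_vec nc \<Longrightarrow> 0\<^sub>m nr nc *\<^sub>v v = (0\<^sub>v nr :: 'a::semiring_0 vec)"
  by (intro eq_vecI) (auto simp: scalar_prod_def)

section \<open>Automorphisms of a path\<close>

lemma adjacent_odd_sum: "\<bar>int k - int l\<bar> = 1 \<Longrightarrow> odd (k + l)"
  by presburger

lemma path_automorphism_fixing_0:
  assumes inj: "inj_on f {..d}"
    and adj: "\<And>i j. i \<le> d \<Longrightarrow> j \<le> d \<Longrightarrow> \<bar>int (f i) - int (f j)\<bar> = 1 \<longleftrightarrow> \<bar>int i - int j\<bar> = 1"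
    and f0: "f 0 = 0"
  shows "i \<le> d \<Longrightarrow> f i = i"
proof (induction i rule: less_induct)
  case (less i)
  show ?case
  proof (cases i)
    case 0
    then show ?thesis using f0 by simp
  next
    case (Suc k)
    have fk: "f k = k" using less Suc by simp
    have "\<bar>int (f (Suc k)) - int k\<bar> = 1" using adj[of "Suc k" k] less.prems fk Suc by simp
    then consider "f (Suc k) = Suc k" | "0 < k" "f (Suc k) = k - 1" by linarith
    then show ?thesis
    proof cases
      case 1
      then show ?thesis using Suc by simp
    next
      case 2
      then have "f (Suc k) = f (k - 1)" using less Suc by simp
      then have "Suc k = k - 1" using inj less.prems Suc by (auto dest: inj_onD)
      then show ?thesis by simp
    qed
  qed
qed

lemma path_automorphism_endpoint:
  assumes inj: "inj_on f {..d}" and range: "\<And>i. i \<le> d \<Longrightarrow> f i \<le> d"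
    and adj: "\<And>i j. i \<le> d \<Longrightarrow> j \<le> d \<Longrightarrow> \<bar>int (f i) - int (f j)\<bar> = 1 \<longleftrightarrow> \<bar>int i - int j\<bar> = 1"
  shows "f 0 = 0 \<or> f 0 = d"
proof (rule ccontr)
  assume "\<not> (f 0 = 0 \<or> f 0 = d)"
  then have mid: "0 < f 0" "f 0 < d" using range[of 0] by auto
  have neighbour_is_1: "a = 1" if "a \<le> d" "\<bar>int (f a) - int (f 0)\<bar> = 1" for a
    using adj[of a 0] that by simp
  have "f ` {..d} = {..d}"
    using range inj by (intro endo_inj_surj) auto
  then have "f 0 - 1 \<in> f ` {..d}" "f 0 + 1 \<in> f ` {..d}" using mid by auto
  then obtain a b where a: "a \<le> d" "f a = f 0 - 1" and b: "b \<le> d" "f b = f 0 + 1"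
    by (metis atMost_iff imageE)
  have "\<bar>int (f a) - int (f 0)\<bar> = 1" "\<bar>int (f b) - int (f 0)\<bar> = 1"
    using a(2) b(2) mid(1) by simp_all
  then have "a = 1" "b = 1" using neighbour_is_1[OF a(1)] neighbour_is_1[OF b(1)] by simp_all
  then show False using a(2) b(2) by simp
qed

lemma path_automorphism:
  assumes inj: "inj_on f {..d}" and range: "\<And>i. i \<le> d \<Longrightarrow> f i \<le> d"
    and adj: "\<And>i j. i \<le> d \<Longrightarrow> j \<le> d \<Longrightarrow> \<bar>int (f i) - int (f j)\<bar> = 1 \<longleftrightarrow> \<bar>int i - int j\<bar> = 1"
  shows "(\<forall>i\<le>d. f i = i) \<or> (\<forall>i\<le>d. f i = d - i)"
  using path_automorphism_endpoint[OF inj range adj]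
proof
  assume "f 0 = 0"
  then show ?thesis using path_automorphism_fixing_0[OF inj adj] by blast
next
  assume f0: "f 0 = d"
  let ?g = "\<lambda>i. d - f i"
  have g_inj: "inj_on ?g {..d}"
  proof (rule inj_onI)
    fix i j assume ij: "i \<in> {..d}" "j \<in> {..d}" "d - f i = d - f j"
    then have "f i = f j" using range[of i] range[of j] by simp
    then show "i = j" using inj ij by (auto dest: inj_onD)
  qed
  have g_adj: "\<bar>int (?g i) - int (?g j)\<bar> = 1 \<longleftrightarrow> \<bar>int i - int j\<bar> = 1" if "i \<le> d" "j \<le> d" for i j
  proof -
    have "int (?g i) - int (?g j) = - (int (f i) - int (f j))"
      using range[OF that(1)] range[OF that(2)] by simp
    then show ?thesis using adj[OF that] by (simp only: abs_minus_cancel)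
  qed
  have "?g 0 = 0" using f0 by simp
  then have "f i = d - i" if "i \<le> d" for i
    using path_automorphism_fixing_0[OF g_inj g_adj _ that] range[OF that] by simp
  then show ?thesis by blast
qed

section \<open>Systems of rank-one orthogonal idempotents\<close>

locale orth_idempotents =
  fixes d :: nat and Es :: "nat \<Rightarrow> 'a::field mat"
  assumes orth_idempotent_system: "orth_idempotent_system d Es"
begin

lemma carrier_Es [simp]: "k \<le> d \<Longrightarrow> Es k \<in> carrier_mat (Suc d) (Suc d)"
  using orth_idempotent_system unfolding orth_idempotent_system_def by auto

lemma Es_mult: "k \<le> d \<Longrightarrow> l \<le> d \<Longrightarrow> Es k * Es l = (if k = l then Es k else 0\<^sub>m (Suc d) (Suc d))"
  using orth_idempotent_system unfolding orth_idempotent_system_def by auto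

lemma Es_rank_one_factorization:
  "\<exists>u g. \<forall>k\<le>d. \<forall>r<Suc d. \<forall>c<Suc d. Es k $$ (r, c) = u k $ r * g k c"
proof -
  have "\<exists>v h. \<forall>r<Suc d. \<forall>c<Suc d. Es k $$ (r, c) = v $ r * h c" if "k \<le> d" for k
  proof -
    have "Es k \<in> carrier_mat (Suc d) (Suc d)" "vec_space.rank (Suc d) (Es k) = 1"
      using orth_idempotent_system that unfolding orth_idempotent_system_def by auto
    then obtain v h where "\<And>r c. r < Suc d \<Longrightarrow> c < Suc d \<Longrightarrow> Es k $$ (r, c) = v $ r * h c"
      using vec_space.rank_one_factorization by metis
    then show ?thesis by blast
  qed
  then show ?thesis by metis
qed

lemma Es_nonzero_entry: "k \<le> d \<Longrightarrow> \<exists>r c. r < Suc d \<and> c < Suc d \<and> Es k $$ (r, c) \<noteq> 0"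
proof (rule ccontr)
  assume k: "k \<le> d" and "\<not> (\<exists>r c. r < Suc d \<and> c < Suc d \<and> Es k $$ (r, c) \<noteq> 0)"
  then have "Es k = 0\<^sub>m (Suc d) (Suc d)" using carrier_matD[OF carrier_Es[OF k]] by (intro eq_matI) auto
  moreover have "vec_space.rank (Suc d) (0\<^sub>m (Suc d) (Suc d) :: 'a mat) = 0" by (rule vec_space.rank_0I)
  ultimately show False
    using orth_idempotent_system k unfolding orth_idempotent_system_def by auto
qed

text \<open>Writing \<open>Es k = u\<^sub>k g\<^sub>k\<^sup>T\<close>, orthogonality and idempotence force
  \<open>g\<^sub>k \<cdot> u\<^sub>l = \<delta>\<^sub>k\<^sub>l\<close>; so the matrices with rows \<open>g\<^sub>k\<close> and columns \<open>u\<^sub>k\<close>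
  are mutually inverse, which is why the \<open>Es k\<close> sum to the identity.\<close>
lemma Es_dual_factorization:
  obtains u g where
    "\<And>k r c. k \<le> d \<Longrightarrow> r < Suc d \<Longrightarrow> c < Suc d \<Longrightarrow> Es k $$ (r, c) = u k $ r * g k c"
    "\<And>k l. k \<le> d \<Longrightarrow> l \<le> d \<Longrightarrow> (\<Sum>m<Suc d. g k m * u l $ m) = (if k = l then 1 else 0)"
proof -
  obtain u g where Es_entry: "\<And>k r c. k \<le> d \<Longrightarrow> r < Suc d \<Longrightarrow> c < Suc d \<Longrightarrow> Es k $$ (r, c) = u k $ r * g k c"
    using Es_rank_one_factorization by blast
  define \<kappa> where "\<kappa> k l = (\<Sum>m<Suc d. g k m * u l $ m)" for k l
  have prod_entry: "(Es k * Es l) $$ (r, c) = u k $ r * \<kappa> k l * g l c"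
    if "k \<le> d" "l \<le> d" "r < Suc d" "c < Suc d" for k l r c
  proof -
    have "(Es k * Es l) $$ (r, c) = (\<Sum>m<Suc d. u k $ r * (g k m * u l $ m) * g l c)"
      using that index_mult_mat_sum[of "Es k" "Suc d" "Suc d" "Es l" "Suc d" r c] Es_entry
      by (simp add: ac_simps)
    then show ?thesis unfolding \<kappa>_def sum_distrib_left sum_distrib_right by (simp add: ac_simps)
  qed
  have "\<kappa> k l = (if k = l then 1 else 0)" if kl: "k \<le> d" "l \<le> d" for k l
  proof -
    obtain r c where rc: "r < Suc d" "c < Suc d" "Es k $$ (r, c) \<noteq> 0"
      using Es_nonzero_entry kl by blast
    obtain r' c' where rc': "r' < Suc d" "c' < Suc d" "Es l $$ (r', c') \<noteq> 0"
      using Es_nonzero_entry kl by blast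
    have u_r: "u k $ r \<noteq> 0" and g_c: "g k c \<noteq> 0" and g_c': "g l c' \<noteq> 0"
      using rc(3) rc'(3) Es_entry[OF kl(1) rc(1,2)] Es_entry[OF kl(2) rc'(1,2)] by auto
    show ?thesis
    proof (cases "k = l")
      case True
      then have "(Es k * Es l) $$ (r, c) = Es k $$ (r, c)" using Es_mult[OF kl] by simp
      then show ?thesis
        using True u_r g_c prod_entry[OF kl rc(1,2)] Es_entry[OF kl(1) rc(1,2)] by simp
    next
      case False
      then have "(Es k * Es l) $$ (r, c') = 0" using Es_mult[OF kl] rc rc' by simp
      then show ?thesis using False u_r g_c' prod_entry[OF kl rc(1) rc'(2)] by simp
    qed
  qed
  then show ?thesis using Es_entry \<kappa>_def by (intro that) auto
qed

lemma sum_Es: "lin_comb_mat d (\<lambda>_. 1) Es = 1\<^sub>m (Suc d)"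
proof -
  obtain u g where Es_entry: "\<And>k r c. k \<le> d \<Longrightarrow> r < Suc d \<Longrightarrow> c < Suc d \<Longrightarrow> Es k $$ (r, c) = u k $ r * g k c"
    and dual: "\<And>k l. k \<le> d \<Longrightarrow> l \<le> d \<Longrightarrow> (\<Sum>m<Suc d. g k m * u l $ m) = (if k = l then 1 else 0)"
    using Es_dual_factorization by blast
  define G where "G = mat (Suc d) (Suc d) (\<lambda>(k, m). g k m)"
  define U where "U = mat (Suc d) (Suc d) (\<lambda>(m, l). u l $ m)"
  have G: "G \<in> carrier_mat (Suc d) (Suc d)" and U: "U \<in> carrier_mat (Suc d) (Suc d)"
    unfolding G_def U_def by auto
  have "(G * U) $$ (k, l) = 1\<^sub>m (Suc d) $$ (k, l)" if "k < Suc d" "l < Suc d" for k l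
  proof -
    have "(G * U) $$ (k, l) = (\<Sum>m<Suc d. g k m * u l $ m)"
      unfolding index_mult_mat_sum[OF G U that] using that by (intro sum.cong) (auto simp: G_def U_def)
    then show ?thesis using dual that by simp
  qed
  then have "G * U = 1\<^sub>m (Suc d)" using G U by (intro eq_matI) auto
  then have UG: "U * G = 1\<^sub>m (Suc d)" by (rule mat_mult_left_right_inverse[OF G U])
  show ?thesis
  proof (rule eq_matI)
    fix r c assume "r < dim_row (1\<^sub>m (Suc d))" "c < dim_col (1\<^sub>m (Suc d))"
    then have rc: "r < Suc d" "c < Suc d" by auto
    have "lin_comb_mat d (\<lambda>_. 1) Es $$ (r, c) = (\<Sum>k<Suc d. u k $ r * g k c)"
      unfolding lin_comb_mat_def using rc Es_entry by (simp add: lessThan_Suc_atMost)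
    also have "\<dots> = (U * G) $$ (r, c)"
      unfolding index_mult_mat_sum[OF U G rc] by (intro sum.cong) (use rc in \<open>auto simp: G_def U_def\<close>)
    finally show "lin_comb_mat d (\<lambda>_. 1) Es $$ (r, c) = 1\<^sub>m (Suc d) $$ (r, c)" using UG by simp
  qed (auto simp: lin_comb_mat_def)
qed

lemma carrier_lin_comb_mat [simp]: "lin_comb_mat d a Es \<in> carrier_mat (Suc d) (Suc d)"
  unfolding lin_comb_mat_def by simp

lemma index_lin_comb_mat:
  "r < Suc d \<Longrightarrow> c < Suc d \<Longrightarrow> lin_comb_mat d a Es $$ (r, c) = (\<Sum>k\<le>d. a k * Es k $$ (r, c))"
  unfolding lin_comb_mat_def by simp

lemma lin_comb_mat_const: "lin_comb_mat d (\<lambda>_. c) Es = c \<cdot>\<^sub>m 1\<^sub>m (Suc d)"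
proof -
  have "lin_comb_mat d (\<lambda>_. c) Es = c \<cdot>\<^sub>m lin_comb_mat d (\<lambda>_. 1) Es"
    unfolding lin_comb_mat_def by (intro eq_matI) (auto simp: sum_distrib_left)
  then show ?thesis unfolding sum_Es .
qed

lemma lin_comb_mat_add: "lin_comb_mat d a Es + lin_comb_mat d b Es = lin_comb_mat d (\<lambda>k. a k + b k) Es"
  unfolding lin_comb_mat_def by (intro eq_matI) (auto simp: distrib_right sum.distrib)

lemma index_lin_comb_mat_mult:
  assumes N: "N \<in> carrier_mat (Suc d) m" and rs: "r < Suc d" "s < m"
  shows "(lin_comb_mat d a Es * N) $$ (r, s) = (\<Sum>k\<le>d. a k * (Es k * N) $$ (r, s))"
proof -
  have "(lin_comb_mat d a Es * N) $$ (r, s) = (\<Sum>p<Suc d. \<Sum>k\<le>d. a k * Es k $$ (r, p) * N $$ (p, s))"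
    unfolding index_mult_mat_sum[OF carrier_lin_comb_mat N rs]
    using rs by (intro sum.cong refl) (simp add: index_lin_comb_mat sum_distrib_right)
  also have "\<dots> = (\<Sum>k\<le>d. \<Sum>p<Suc d. a k * Es k $$ (r, p) * N $$ (p, s))"
    by (rule sum.swap)
  also have "\<dots> = (\<Sum>k\<le>d. a k * (Es k * N) $$ (r, s))"
  proof (rule sum.cong[OF refl])
    fix k assume "k \<in> {..d}"
    then have "Es k \<in> carrier_mat (Suc d) (Suc d)" by simp
    then show "(\<Sum>p<Suc d. a k * Es k $$ (r, p) * N $$ (p, s)) = a k * (Es k * N) $$ (r, s)"
      by (simp only: index_mult_mat_sum[OF _ N rs] sum_distrib_left mult.assoc)
  qed
  finally show ?thesis .
qed

lemma index_mult_lin_comb_mat: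
  assumes N: "N \<in> carrier_mat m (Suc d)" and rs: "r < m" "s < Suc d"
  shows "(N * lin_comb_mat d b Es) $$ (r, s) = (\<Sum>l\<le>d. b l * (N * Es l) $$ (r, s))"
proof -
  have "(N * lin_comb_mat d b Es) $$ (r, s) = (\<Sum>q<Suc d. \<Sum>l\<le>d. N $$ (r, q) * (b l * Es l $$ (q, s)))"
    unfolding index_mult_mat_sum[OF N carrier_lin_comb_mat rs]
    using rs by (intro sum.cong) (auto simp: index_lin_comb_mat sum_distrib_left)
  also have "\<dots> = (\<Sum>l\<le>d. \<Sum>q<Suc d. N $$ (r, q) * (b l * Es l $$ (q, s)))"
    by (rule sum.swap)
  also have "\<dots> = (\<Sum>l\<le>d. b l * (N * Es l) $$ (r, s))"
  proof (rule sum.cong[OF refl])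
    fix l assume "l \<in> {..d}"
    then have "Es l \<in> carrier_mat (Suc d) (Suc d)" by simp
    then show "(\<Sum>q<Suc d. N $$ (r, q) * (b l * Es l $$ (q, s))) = b l * (N * Es l) $$ (r, s)"
      by (simp only: index_mult_mat_sum[OF N _ rs] sum_distrib_left mult.left_commute)
  qed
  finally show ?thesis .
qed

lemma index_lin_comb_sandwich:
  assumes M: "M \<in> carrier_mat (Suc d) (Suc d)" and rs: "r < Suc d" "s < Suc d"
  shows "(lin_comb_mat d a Es * M * lin_comb_mat d b Es) $$ (r, s)
     = (\<Sum>k\<le>d. \<Sum>l\<le>d. a k * b l * (Es k * M * Es l) $$ (r, s))"
proof -
  from M have M': "M \<in> carrier_mat (Suc d) (Suc d)" by simp
  have "(lin_comb_mat d a Es * M * lin_comb_mat d b Es) $$ (r, s)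
      = (lin_comb_mat d a Es * (M * lin_comb_mat d b Es)) $$ (r, s)"
    by (simp add: assoc_mult_mat[OF carrier_lin_comb_mat M' carrier_lin_comb_mat])
  also have "\<dots> = (\<Sum>k\<le>d. a k * (Es k * (M * lin_comb_mat d b Es)) $$ (r, s))"
    by (rule index_lin_comb_mat_mult[OF _ rs]) (use M in simp)
  also have "\<dots> = (\<Sum>k\<le>d. \<Sum>l\<le>d. a k * b l * (Es k * M * Es l) $$ (r, s))"
  proof (rule sum.cong[OF refl])
    fix k assume "k \<in> {..d}"
    then have Es_k: "Es k \<in> carrier_mat (Suc d) (Suc d)" by simp
    have "(Es k * (M * lin_comb_mat d b Es)) $$ (r, s) = (Es k * M * lin_comb_mat d b Es) $$ (r, s)"
      by (simp add: assoc_mult_mat[OF Es_k M' carrier_lin_comb_mat])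
    also have "\<dots> = (\<Sum>l\<le>d. b l * (Es k * M * Es l) $$ (r, s))"
      by (rule index_mult_lin_comb_mat[OF _ rs]) (use Es_k M in simp)
    finally show "a k * (Es k * (M * lin_comb_mat d b Es)) $$ (r, s) = (\<Sum>l\<le>d. a k * b l * (Es k * M * Es l) $$ (r, s))"
      by (simp add: sum_distrib_left mult.assoc)
  qed
  finally show ?thesis .
qed

lemma lin_comb_mat_mult: "lin_comb_mat d a Es * lin_comb_mat d b Es = lin_comb_mat d (\<lambda>k. a k * b k) Es"
proof (rule eq_matI)
  fix r s assume "r < dim_row (lin_comb_mat d (\<lambda>k. a k * b k) Es)" "s < dim_col (lin_comb_mat d (\<lambda>k. a k * b k) Es)"
  then have rs: "r < Suc d" "s < Suc d" by (auto simp: lin_comb_mat_def)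
  have "lin_comb_mat d a Es * lin_comb_mat d b Es = lin_comb_mat d a Es * 1\<^sub>m (Suc d) * lin_comb_mat d b Es"
    using right_mult_one_mat[OF carrier_lin_comb_mat] by simp
  then have "(lin_comb_mat d a Es * lin_comb_mat d b Es) $$ (r, s)
      = (\<Sum>k\<le>d. \<Sum>l\<le>d. a k * b l * (Es k * 1\<^sub>m (Suc d) * Es l) $$ (r, s))"
    using index_lin_comb_sandwich[OF one_carrier_mat rs] by simp
  also have "\<dots> = (\<Sum>k\<le>d. \<Sum>l\<le>d. if l = k then a k * b k * Es k $$ (r, s) else 0)"
    using rs by (intro sum.cong refl) (auto simp: Es_mult right_mult_one_mat[OF carrier_Es])
  also have "\<dots> = lin_comb_mat d (\<lambda>k. a k * b k) Es $$ (r, s)"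
    using rs by (simp add: index_lin_comb_mat)
  finally show "(lin_comb_mat d a Es * lin_comb_mat d b Es) $$ (r, s) = lin_comb_mat d (\<lambda>k. a k * b k) Es $$ (r, s)" .
qed (auto simp: lin_comb_mat_def)

end

section \<open>Eigenvector coordinates of a multiplicity-free matrix\<close>

locale mult_free =
  fixes d :: nat and A :: "'a::field mat" and th :: "nat \<Rightarrow> 'a" and E :: "nat \<Rightarrow> 'a mat"
  assumes mult_free_with: "mult_free_with d A th E"
begin

lemma carrier_A [simp]: "A \<in> carrier_mat (Suc d) (Suc d)"
  using mult_free_with unfolding mult_free_with_def by simp

lemma carrier_E [simp]: "k \<le> d \<Longrightarrow> E k \<in> carrier_mat (Suc d) (Suc d)"
  using mult_free_with unfolding mult_free_with_def by simp

lemma th_eq_iff: "j \<le> d \<Longrightarrow> k \<le> d \<Longrightarrow> th j = th k \<longleftrightarrow> j = k"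
proof -
  have "inj_on th {0..d}" using mult_free_with unfolding mult_free_with_def by blast
  then show "j \<le> d \<Longrightarrow> k \<le> d \<Longrightarrow> th j = th k \<longleftrightarrow> j = k" by (auto dest: inj_onD)
qed

lemma E_mult_eigenvector:
  "k \<le> d \<Longrightarrow> j \<le> d \<Longrightarrow> v \<in> carrier_vec (Suc d) \<Longrightarrow> A *\<^sub>v v = th j \<cdot>\<^sub>v v \<Longrightarrow>
   E k *\<^sub>v v = (if k = j then v else 0\<^sub>v (Suc d))"
  using mult_free_with unfolding mult_free_with_def Suc_eq_plus1 by blast

definition eigvec :: "nat \<Rightarrow> 'a vec" where
  "eigvec j = (SOME v. eigenvector A v (th j))"

lemma eigvec:
  assumes "j \<le> d"
  shows "eigvec j \<in> carrier_vec (Suc d)" "eigvec j \<noteq> 0\<^sub>v (Suc d)" "A *\<^sub>v eigvec j = th j \<cdot>\<^sub>v eigvec j"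
proof -
  have "eigenvalue A (th j)" using mult_free_with assms unfolding mult_free_with_def by auto
  then have "eigenvector A (eigvec j) (th j)" unfolding eigenvalue_def eigvec_def by (rule someI_ex)
  then show "eigvec j \<in> carrier_vec (Suc d)" "eigvec j \<noteq> 0\<^sub>v (Suc d)" "A *\<^sub>v eigvec j = th j \<cdot>\<^sub>v eigvec j"
    using carrier_matD[OF carrier_A] unfolding eigenvector_def by auto
qed

lemma E_mult_eigvec: "k \<le> d \<Longrightarrow> j \<le> d \<Longrightarrow> E k *\<^sub>v eigvec j = (if k = j then eigvec j else 0\<^sub>v (Suc d))"
  using E_mult_eigenvector eigvec by blast

definition eigvec_mat :: "'a mat" where
  "eigvec_mat = mat (Suc d) (Suc d) (\<lambda>(r, j). eigvec j $ r)"

lemma carrier_eigvec_mat [simp]: "eigvec_mat \<in> carrier_mat (Suc d) (Suc d)"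
  unfolding eigvec_mat_def by simp

lemma dim_eigvec_mat [simp]: "dim_row eigvec_mat = Suc d" "dim_col eigvec_mat = Suc d"
  unfolding eigvec_mat_def by simp_all

lemma index_eigvec_mat_mult_vec:
  "c \<in> carrier_vec (Suc d) \<Longrightarrow> r < Suc d \<Longrightarrow> (eigvec_mat *\<^sub>v c) $ r = (\<Sum>j<Suc d. eigvec j $ r * c $ j)"
  unfolding eigvec_mat_def by (simp add: scalar_prod_def atLeast0LessThan del: sum.lessThan_Suc)

lemma eigvec_mat_mult_single:
  assumes j: "j \<le> d" and c: "c \<in> carrier_vec (Suc d)" and zero: "\<And>k. k \<le> d \<Longrightarrow> k \<noteq> j \<Longrightarrow> c $ k = 0"
  shows "eigvec_mat *\<^sub>v c = (c $ j) \<cdot>\<^sub>v eigvec j"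
proof (rule eq_vecI)
  fix r assume "r < dim_vec ((c $ j) \<cdot>\<^sub>v eigvec j)"
  then have r: "r < Suc d" using eigvec(1)[OF j] by simp
  have "(eigvec_mat *\<^sub>v c) $ r = (\<Sum>k<Suc d. if k = j then eigvec j $ r * c $ j else 0)"
    unfolding index_eigvec_mat_mult_vec[OF c r] using zero by (intro sum.cong) auto
  also have "\<dots> = ((c $ j) \<cdot>\<^sub>v eigvec j) $ r"
    using j r eigvec(1)[OF j] by (simp add: mult.commute)
  finally show "(eigvec_mat *\<^sub>v c) $ r = ((c $ j) \<cdot>\<^sub>v eigvec j) $ r" .
qed (use eigvec(1)[OF j] in simp)

lemma diagonal_mult_eigvec_mat:
  assumes M: "M \<in> carrier_mat (Suc d) (Suc d)"
    and diag: "\<And>j. j \<le> d \<Longrightarrow> M *\<^sub>v eigvec j = f j \<cdot>\<^sub>v eigvec j"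
    and c: "c \<in> carrier_vec (Suc d)"
  shows "M *\<^sub>v (eigvec_mat *\<^sub>v c) = eigvec_mat *\<^sub>v vec (Suc d) (\<lambda>j. f j * c $ j)"
proof (rule eq_vecI)
  fix r assume "r < dim_vec (eigvec_mat *\<^sub>v vec (Suc d) (\<lambda>j. f j * c $ j))"
  then have r: "r < Suc d" by simp
  have "(M *\<^sub>v (eigvec_mat *\<^sub>v c)) $ r = ((M * eigvec_mat) *\<^sub>v c) $ r"
    using assoc_mult_mat_vec[OF M carrier_eigvec_mat c] by simp
  also have "\<dots> = (\<Sum>j<Suc d. (M * eigvec_mat) $$ (r, j) * c $ j)"
    using M c r by (intro index_mult_mat_vec_sum) simp_all
  also have "\<dots> = (\<Sum>j<Suc d. eigvec j $ r * (f j * c $ j))"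
  proof (rule sum.cong[OF refl])
    fix j assume "j \<in> {..<Suc d}"
    then have j: "j \<le> d" by simp
    have "(M * eigvec_mat) $$ (r, j) = (M *\<^sub>v col eigvec_mat j) $ r"
      using M r j by simp
    also have "col eigvec_mat j = eigvec j"
      using j eigvec(1)[OF j] unfolding eigvec_mat_def by (intro eq_vecI) auto
    finally show "(M * eigvec_mat) $$ (r, j) * c $ j = eigvec j $ r * (f j * c $ j)"
      using diag[OF j] r eigvec(1)[OF j] by simp
  qed
  also have "\<dots> = (\<Sum>j<Suc d. eigvec j $ r * vec (Suc d) (\<lambda>j. f j * c $ j) $ j)"
    by (intro sum.cong) auto
  also have "\<dots> = (eigvec_mat *\<^sub>v vec (Suc d) (\<lambda>j. f j * c $ j)) $ r"
    by (rule index_eigvec_mat_mult_vec[symmetric]) (use r in simp_all)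
  finally show "(M *\<^sub>v (eigvec_mat *\<^sub>v c)) $ r = (eigvec_mat *\<^sub>v vec (Suc d) (\<lambda>j. f j * c $ j)) $ r" .
qed (use M in simp)

lemma A_mult_eigvec_mat:
  "c \<in> carrier_vec (Suc d) \<Longrightarrow> A *\<^sub>v (eigvec_mat *\<^sub>v c) = eigvec_mat *\<^sub>v vec (Suc d) (\<lambda>j. th j * c $ j)"
  using eigvec(3) by (intro diagonal_mult_eigvec_mat) simp_all

lemma E_mult_eigvec_mat:
  assumes k: "k \<le> d" and c: "c \<in> carrier_vec (Suc d)"
  shows "E k *\<^sub>v (eigvec_mat *\<^sub>v c) = (c $ k) \<cdot>\<^sub>v eigvec k"
proof -
  have "E k *\<^sub>v eigvec j = (if k = j then 1 else 0) \<cdot>\<^sub>v eigvec j" if "j \<le> d" for j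
    using E_mult_eigvec[OF k that] eigvec(1)[OF that] by auto
  then have "E k *\<^sub>v (eigvec_mat *\<^sub>v c) = eigvec_mat *\<^sub>v vec (Suc d) (\<lambda>j. (if k = j then 1 else 0) * c $ j)"
    using k c by (intro diagonal_mult_eigvec_mat) auto
  also have "\<dots> = (c $ k) \<cdot>\<^sub>v eigvec k"
    using k by (subst eigvec_mat_mult_single[of k]) auto
  finally show ?thesis .
qed

lemma det_eigvec_mat: "det eigvec_mat \<noteq> 0"
proof
  assume "det eigvec_mat = 0"
  then obtain c where c: "c \<in> carrier_vec (Suc d)" "c \<noteq> 0\<^sub>v (Suc d)" "eigvec_mat *\<^sub>v c = 0\<^sub>v (Suc d)"
    using det_0_iff_vec_prod_zero_field[of eigvec_mat "Suc d"] by auto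
  have "c $ k = 0" if "k < Suc d" for k
  proof -
    have "(c $ k) \<cdot>\<^sub>v eigvec k = E k *\<^sub>v 0\<^sub>v (Suc d)"
      using E_mult_eigvec_mat[of k c] c that by simp
    also have "\<dots> = 0\<^sub>v (Suc d)"
      using that by (simp add: less_Suc_eq_le mult_mat_vec_zero[of _ "Suc d" "Suc d"])
    finally show ?thesis using eigvec that by (intro smult_vec_eq_zero) auto
  qed
  then have "c = 0\<^sub>v (Suc d)" using c(1) by (intro eq_vecI) auto
  with c(2) show False ..
qed

lemma eigvec_mat_invertible:
  obtains W' where "W' \<in> carrier_mat (Suc d) (Suc d)" "W' * eigvec_mat = 1\<^sub>m (Suc d)" "eigvec_mat * W' = 1\<^sub>m (Suc d)"
proof -
  have "eigvec_mat \<in> Units (ring_mat TYPE('a) (Suc d) undefined)"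
    using det_eigvec_mat by (intro det_non_zero_imp_unit) simp_all
  then show ?thesis using that unfolding Units_def ring_mat_simps by auto
qed

lemma eigvec_coordinates:
  assumes x: "x \<in> carrier_vec (Suc d)"
  obtains c where "c \<in> carrier_vec (Suc d)" "x = eigvec_mat *\<^sub>v c"
proof -
  obtain W' where W': "W' \<in> carrier_mat (Suc d) (Suc d)" "eigvec_mat * W' = 1\<^sub>m (Suc d)"
    using eigvec_mat_invertible by blast
  have "eigvec_mat *\<^sub>v (W' *\<^sub>v x) = x"
    using assoc_mult_mat_vec[OF carrier_eigvec_mat W'(1) x] W'(2) x by simp
  with W' x show ?thesis by (intro that[of "W' *\<^sub>v x"]) simp_all
qed

lemma eigvec_mat_mult_vec_inj:
  assumes a: "a \<in> carrier_vec (Suc d)" and b: "b \<in> carrier_vec (Suc d)"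
    and eq: "eigvec_mat *\<^sub>v a = eigvec_mat *\<^sub>v b"
  shows "a = b"
proof -
  obtain W' where W': "W' \<in> carrier_mat (Suc d) (Suc d)" "W' * eigvec_mat = 1\<^sub>m (Suc d)"
    using eigvec_mat_invertible by blast
  have "(W' * eigvec_mat) *\<^sub>v a = (W' * eigvec_mat) *\<^sub>v b"
    using eq assoc_mult_mat_vec[OF W'(1) carrier_eigvec_mat a] assoc_mult_mat_vec[OF W'(1) carrier_eigvec_mat b]
    by simp
  with W'(2) a b show ?thesis by simp
qed

lemma eigenvalue_cases:
  assumes x: "x \<in> carrier_vec (Suc d)" "x \<noteq> 0\<^sub>v (Suc d)" and eig: "A *\<^sub>v x = \<mu> \<cdot>\<^sub>v x"
  shows "\<exists>k\<le>d. th k = \<mu>"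
proof -
  obtain c where c: "c \<in> carrier_vec (Suc d)" and x_c: "x = eigvec_mat *\<^sub>v c"
    using eigvec_coordinates[OF x(1)] by blast
  have "eigvec_mat *\<^sub>v vec (Suc d) (\<lambda>j. th j * c $ j) = A *\<^sub>v x"
    unfolding x_c by (rule A_mult_eigvec_mat[OF c, symmetric])
  also have "\<dots> = \<mu> \<cdot>\<^sub>v x" by (rule eig)
  also have "\<dots> = eigvec_mat *\<^sub>v (\<mu> \<cdot>\<^sub>v c)"
    unfolding x_c by (rule mult_mat_vec[OF carrier_eigvec_mat c, symmetric])
  finally have coord: "vec (Suc d) (\<lambda>j. th j * c $ j) = \<mu> \<cdot>\<^sub>v c"
    by (rule eigvec_mat_mult_vec_inj[rotated 2]) (simp_all add: c)
  have "\<exists>k<Suc d. c $ k \<noteq> 0"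
  proof (rule ccontr)
    assume "\<not> (\<exists>k<Suc d. c $ k \<noteq> 0)"
    then have "c = 0\<^sub>v (Suc d)" using c by (intro eq_vecI) auto
    then have "x = 0\<^sub>v (Suc d)" unfolding x_c by (simp add: mult_mat_vec_zero)
    with x(2) show False ..
  qed
  then obtain k where k: "k < Suc d" "c $ k \<noteq> 0" by blast
  then have "th k * c $ k = \<mu> * c $ k"
    using arg_cong[OF coord, of "\<lambda>v. v $ k"] c by simp
  then have "th k = \<mu>" using k(2) by simp
  then show ?thesis using k(1) by (auto simp: less_Suc_eq_le)
qed

lemma mat_eq_on_eigvecs:
  assumes M: "M \<in> carrier_mat (Suc d) (Suc d)" and N: "N \<in> carrier_mat (Suc d) (Suc d)"
    and eq: "\<And>j. j \<le> d \<Longrightarrow> M *\<^sub>v eigvec j = N *\<^sub>v eigvec j"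
  shows "M = N"
proof -
  obtain W' where W': "W' \<in> carrier_mat (Suc d) (Suc d)" "eigvec_mat * W' = 1\<^sub>m (Suc d)"
    using eigvec_mat_invertible by blast
  have MN: "M * eigvec_mat = N * eigvec_mat"
  proof (rule mat_col_eqI)
    fix j assume "j < dim_col (N * eigvec_mat)"
    then have j: "j \<le> d" by simp
    have "col eigvec_mat j = eigvec j"
      using j eigvec(1)[OF j] unfolding eigvec_mat_def by (intro eq_vecI) auto
    then show "col (M * eigvec_mat) j = col (N * eigvec_mat) j"
      using col_mult2[OF M carrier_eigvec_mat, of j] col_mult2[OF N carrier_eigvec_mat, of j] j eq[OF j]
      by simp
  qed (use M N in simp_all)
  have "M = M * eigvec_mat * W'"
    using assoc_mult_mat[OF M carrier_eigvec_mat W'(1)] W'(2) M by simp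
  also have "\<dots> = N"
    using assoc_mult_mat[OF N carrier_eigvec_mat W'(1)] W'(2) N unfolding MN by simp
  finally show ?thesis .
qed

lemma th_square_eq_char_two:
  assumes two: "(2::'a) = 0" and kj: "k \<le> d" "j \<le> d" and square: "th k * th k = th j * th j"
  shows "k = j"
proof -
  have "(th k - th j) * (th k - th j) = (th k * th k - th j * th j) - 2 * (th j * (th k - th j))"
    by (simp add: algebra_simps)
  then have "th k = th j" using square two by simp
  then show ?thesis using th_eq_iff[OF kj] by simp
qed

lemma eigvec_of_square_eigenvalue:
  assumes x: "x \<in> carrier_vec (Suc d)" and j: "j \<le> d"
    and square: "A *\<^sub>v (A *\<^sub>v x) = (th j * th j) \<cdot>\<^sub>v x"
    and unique: "\<And>k. k \<le> d \<Longrightarrow> th k * th k = th j * th j \<Longrightarrow> k = j"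
  shows "\<exists>a. x = a \<cdot>\<^sub>v eigvec j"
proof -
  obtain c where c: "c \<in> carrier_vec (Suc d)" and x_c: "x = eigvec_mat *\<^sub>v c"
    using eigvec_coordinates[OF x] by blast
  have "A *\<^sub>v (A *\<^sub>v x) = eigvec_mat *\<^sub>v vec (Suc d) (\<lambda>k. th k * vec (Suc d) (\<lambda>k. th k * c $ k) $ k)"
    unfolding x_c A_mult_eigvec_mat[OF c] by (rule A_mult_eigvec_mat) simp
  also have "\<dots> = eigvec_mat *\<^sub>v vec (Suc d) (\<lambda>k. th k * (th k * c $ k))"
    by (intro arg_cong[where f = "\<lambda>v. eigvec_mat *\<^sub>v v"] eq_vecI) auto
  finally have "eigvec_mat *\<^sub>v vec (Suc d) (\<lambda>k. th k * (th k * c $ k)) = (th j * th j) \<cdot>\<^sub>v x"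
    unfolding square by (rule sym)
  also have "\<dots> = eigvec_mat *\<^sub>v ((th j * th j) \<cdot>\<^sub>v c)"
    unfolding x_c by (rule mult_mat_vec[OF carrier_eigvec_mat c, symmetric])
  finally have coord: "vec (Suc d) (\<lambda>k. th k * (th k * c $ k)) = (th j * th j) \<cdot>\<^sub>v c"
    by (rule eigvec_mat_mult_vec_inj[rotated 2]) (simp_all add: c)
  have "c $ k = 0" if k: "k \<le> d" "k \<noteq> j" for k
  proof (rule ccontr)
    assume "c $ k \<noteq> 0"
    moreover have "th k * (th k * c $ k) = th j * th j * c $ k"
      using arg_cong[OF coord, of "\<lambda>v. v $ k"] k c by simp
    ultimately show False using unique k by (simp add: mult.assoc)
  qed
  then show ?thesis using c j unfolding x_c by (auto simp: eigvec_mat_mult_single)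
qed

end

section \<open>The sign matrix of a bipartite system\<close>

locale bipartite_system = orth_idempotents d Es + mult_free d A th E
  for d :: nat and Es :: "nat \<Rightarrow> 'a::field mat" and A :: "'a mat" and th :: "nat \<Rightarrow> 'a"
    and E :: "nat \<Rightarrow> 'a mat" +
  assumes tridiag: "tridiag_wrt d A Es"
    and bipartite: "bipartite d A Es"
begin

lemma Es_A_Es_same: "k \<le> d \<Longrightarrow> Es k * A * Es k = 0\<^sub>m (Suc d) (Suc d)"
proof -
  assume k: "k \<le> d"
  obtain u g where "\<forall>k\<le>d. \<forall>r<Suc d. \<forall>c<Suc d. Es k $$ (r, c) = u k $ r * g k c"
    using Es_rank_one_factorization by blast
  then have "Es k * A * Es k = mat_trace (Es k * A) \<cdot>\<^sub>m Es k"
    using k by (intro rank_one_sandwich[OF carrier_A carrier_Es[OF k]]) simp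
  also have "mat_trace (Es k * A) = 0"
    using bipartite k unfolding bipartite_def by simp
  finally show ?thesis using carrier_matD[OF carrier_Es[OF k]] by (intro eq_matI) auto
qed

lemma Es_A_Es_adjacent:
  assumes kl: "k \<le> d" "l \<le> d" and nonzero: "Es k * A * Es l \<noteq> 0\<^sub>m (Suc d) (Suc d)"
  shows "\<bar>int k - int l\<bar> = 1"
proof -
  have "k \<noteq> l" using Es_A_Es_same[OF kl(1)] nonzero by auto
  moreover have "\<not> 1 < \<bar>int k - int l\<bar>"
    using tridiag kl nonzero unfolding tridiag_wrt_def Suc_eq_plus1 by blast
  ultimately show ?thesis by linarith
qed

text \<open>Since \<open>A\<close> is block tridiagonal with zero diagonal blocks, a sandwich
  \<open>(\<Sum>\<^sub>k a\<^sub>k Es k) A (\<Sum>\<^sub>l b\<^sub>l Es l)\<close> depends only on the products \<open>a\<^sub>k b\<^sub>l\<close> of adjacent indices.\<close>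
lemma lin_comb_sandwich_A_cong:
  assumes adjacent: "\<And>k l. k \<le> d \<Longrightarrow> l \<le> d \<Longrightarrow> \<bar>int k - int l\<bar> = 1 \<Longrightarrow> a k * b l = a' k * b' l"
  shows "lin_comb_mat d a Es * A * lin_comb_mat d b Es = lin_comb_mat d a' Es * A * lin_comb_mat d b' Es"
proof (rule eq_matI)
  fix r s
  assume "r < dim_row (lin_comb_mat d a' Es * A * lin_comb_mat d b' Es)"
    "s < dim_col (lin_comb_mat d a' Es * A * lin_comb_mat d b' Es)"
  then have rs: "r < Suc d" "s < Suc d" using carrier_matD[OF carrier_lin_comb_mat] by simp_all
  show "(lin_comb_mat d a Es * A * lin_comb_mat d b Es) $$ (r, s)
      = (lin_comb_mat d a' Es * A * lin_comb_mat d b' Es) $$ (r, s)"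
    unfolding index_lin_comb_sandwich[OF carrier_A rs]
  proof (intro sum.cong refl)
    fix k l assume "k \<in> {..d}" "l \<in> {..d}"
    then show "a k * b l * (Es k * A * Es l) $$ (r, s) = a' k * b' l * (Es k * A * Es l) $$ (r, s)"
      using adjacent[of k l] Es_A_Es_adjacent[of k l] rs
      by (cases "Es k * A * Es l = 0\<^sub>m (Suc d) (Suc d)") auto
  qed
qed (use carrier_matD[OF carrier_lin_comb_mat] in simp_all)

definition sign_mat :: "'a mat" where
  "sign_mat = lin_comb_mat d (\<lambda>k. (-1) ^ k) Es"

definition even_part :: "'a mat" where
  "even_part = lin_comb_mat d (\<lambda>k. if even k then 1 else 0) Es"

definition odd_part :: "'a mat" where
  "odd_part = lin_comb_mat d (\<lambda>k. if odd k then 1 else 0) Es"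

lemma carrier_parts [simp]:
  "sign_mat \<in> carrier_mat (Suc d) (Suc d)" "even_part \<in> carrier_mat (Suc d) (Suc d)"
  "odd_part \<in> carrier_mat (Suc d) (Suc d)"
  unfolding sign_mat_def even_part_def odd_part_def by simp_all

lemma sign_mat_square: "sign_mat * sign_mat = 1\<^sub>m (Suc d)"
  unfolding sign_mat_def lin_comb_mat_mult by (simp add: power_mult_distrib[symmetric] sum_Es)

lemma sign_mat_A_sign_mat: "sign_mat * A * sign_mat = (-1) \<cdot>\<^sub>m A"
proof -
  have "sign_mat * A * sign_mat = lin_comb_mat d (\<lambda>_. 1) Es * A * lin_comb_mat d (\<lambda>_. -1) Es"
    unfolding sign_mat_def
    by (rule lin_comb_sandwich_A_cong) (auto simp: power_add[symmetric] dest: adjacent_odd_sum)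
  also have "\<dots> = (-1) \<cdot>\<^sub>m A"
    by (simp add: sum_Es lin_comb_mat_const mult_smult_distrib[OF carrier_A one_carrier_mat]
        left_mult_one_mat[OF carrier_A] right_mult_one_mat[OF carrier_A])
  finally show ?thesis .
qed

lemma A_sign_mat: "A * sign_mat = (-1) \<cdot>\<^sub>m (sign_mat * A)"
proof -
  have "A * sign_mat = (sign_mat * sign_mat) * (A * sign_mat)"
    by (simp add: sign_mat_square left_mult_one_mat[of _ "Suc d" "Suc d"])
  also have "\<dots> = sign_mat * (sign_mat * A * sign_mat)"
    by (simp add: assoc_mult_square_mat[of _ "Suc d"])
  also have "\<dots> = (-1) \<cdot>\<^sub>m (sign_mat * A)"
    by (simp add: sign_mat_A_sign_mat mult_smult_distrib[OF carrier_parts(1) carrier_A])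
  finally show ?thesis .
qed

lemma even_part_add_odd_part: "even_part + odd_part = 1\<^sub>m (Suc d)"
proof -
  have parts: "(\<lambda>k. (if even k then 1 else 0) + (if odd k then 1 else 0)) = (\<lambda>_. 1::'a)" by auto
  show ?thesis unfolding even_part_def odd_part_def lin_comb_mat_add parts sum_Es ..
qed

lemma odd_part_even_part: "odd_part * even_part = 0\<^sub>m (Suc d) (Suc d)"
proof -
  have parts: "(\<lambda>k. (if odd k then 1 else 0) * (if even k then 1 else 0)) = (\<lambda>_. 0::'a)" by auto
  show ?thesis unfolding even_part_def odd_part_def lin_comb_mat_mult parts lin_comb_mat_const by auto
qed

lemma A_even_part: "A * even_part = odd_part * A"
proof -
  have "lin_comb_mat d (\<lambda>_. 1) Es * A * even_part = odd_part * A * lin_comb_mat d (\<lambda>_. 1) Es"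
    unfolding even_part_def odd_part_def
    by (rule lin_comb_sandwich_A_cong) (use adjacent_odd_sum in auto)
  then show ?thesis
    unfolding sum_Es by (simp add: left_mult_one_mat[OF carrier_A] right_mult_one_mat[of _ "Suc d"])
qed

lemma A_odd_part: "A * odd_part = even_part * A"
proof -
  have "lin_comb_mat d (\<lambda>_. 1) Es * A * odd_part = even_part * A * lin_comb_mat d (\<lambda>_. 1) Es"
    unfolding even_part_def odd_part_def
    by (rule lin_comb_sandwich_A_cong) (use adjacent_odd_sum in auto)
  then show ?thesis
    unfolding sum_Es by (simp add: left_mult_one_mat[OF carrier_A] right_mult_one_mat[of _ "Suc d"])
qed


lemma sign_mat_eigvec:
  assumes j: "j \<le> d"
  shows "sign_mat *\<^sub>v eigvec j \<in> carrier_vec (Suc d)" "sign_mat *\<^sub>v eigvec j \<noteq> 0\<^sub>v (Suc d)"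
    "A *\<^sub>v (sign_mat *\<^sub>v eigvec j) = (- th j) \<cdot>\<^sub>v (sign_mat *\<^sub>v eigvec j)"
proof -
  note w = eigvec[OF j]
  show "sign_mat *\<^sub>v eigvec j \<in> carrier_vec (Suc d)" by (rule mult_mat_vec_carrier[OF carrier_parts(1) w(1)])
  show "sign_mat *\<^sub>v eigvec j \<noteq> 0\<^sub>v (Suc d)"
  proof
    assume "sign_mat *\<^sub>v eigvec j = 0\<^sub>v (Suc d)"
    then have "(sign_mat * sign_mat) *\<^sub>v eigvec j = 0\<^sub>v (Suc d)"
      using assoc_mult_mat_vec[OF carrier_parts(1) carrier_parts(1) w(1)]
        mult_mat_vec_zero[OF carrier_parts(1)] by simp
    then show False using w(1,2) sign_mat_square by simp
  qed
  have "A *\<^sub>v (sign_mat *\<^sub>v eigvec j) = ((-1) \<cdot>\<^sub>m (sign_mat * A)) *\<^sub>v eigvec j"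
    using assoc_mult_mat_vec[OF carrier_A carrier_parts(1) w(1)] A_sign_mat by simp
  also have "\<dots> = (-1) \<cdot>\<^sub>v (sign_mat *\<^sub>v (th j \<cdot>\<^sub>v eigvec j))"
    unfolding smult_mat_mult_vec[OF mult_carrier_square_mat[OF carrier_parts(1) carrier_A] w(1)]
    using assoc_mult_mat_vec[OF carrier_parts(1) carrier_A w(1)] w(3) by simp
  also have "\<dots> = (- th j) \<cdot>\<^sub>v (sign_mat *\<^sub>v eigvec j)"
    by (simp add: mult_mat_vec[OF carrier_parts(1) w(1)] smult_smult_assoc)
  finally show "A *\<^sub>v (sign_mat *\<^sub>v eigvec j) = (- th j) \<cdot>\<^sub>v (sign_mat *\<^sub>v eigvec j)" .
qed

definition neg_index :: "nat \<Rightarrow> nat" where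
  "neg_index j = (SOME k. k \<le> d \<and> th k = - th j)"

lemma neg_index: "j \<le> d \<Longrightarrow> neg_index j \<le> d \<and> th (neg_index j) = - th j"
  unfolding neg_index_def
  by (rule someI_ex) (use eigenvalue_cases[OF sign_mat_eigvec] in blast)

lemma neg_index_inj: "i \<le> d \<Longrightarrow> j \<le> d \<Longrightarrow> neg_index i = neg_index j \<Longrightarrow> i = j"
  using neg_index[of i] neg_index[of j] th_eq_iff by (metis neg_equal_iff_equal)

lemma sign_mat_E_sign_mat: "i \<le> d \<Longrightarrow> sign_mat * E (neg_index i) * sign_mat = E i"
proof (rule mat_eq_on_eigvecs)
  fix j assume i: "i \<le> d" and j: "j \<le> d"
  note w = eigvec[OF j] and Dw = sign_mat_eigvec[OF j]
  have ni: "neg_index i \<le> d" and nj: "neg_index j \<le> d" using neg_index i j by simp_all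
  have E_Dw: "E (neg_index i) *\<^sub>v (sign_mat *\<^sub>v eigvec j) = (if i = j then sign_mat *\<^sub>v eigvec j else 0\<^sub>v (Suc d))"
    using E_mult_eigenvector[OF ni nj Dw(1)] Dw(3) neg_index[OF j] neg_index_inj[OF i j] by auto
  have "(sign_mat * E (neg_index i) * sign_mat) *\<^sub>v eigvec j
      = sign_mat *\<^sub>v (E (neg_index i) *\<^sub>v (sign_mat *\<^sub>v eigvec j))"
    using assoc_mult_mat_vec[OF mult_carrier_square_mat[OF carrier_parts(1) carrier_E[OF ni]] carrier_parts(1) w(1)]
      assoc_mult_mat_vec[OF carrier_parts(1) carrier_E[OF ni] Dw(1)] by simp
  also have "\<dots> = (if i = j then (sign_mat * sign_mat) *\<^sub>v eigvec j else 0\<^sub>v (Suc d))"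
    unfolding E_Dw using assoc_mult_mat_vec[OF carrier_parts(1) carrier_parts(1) w(1)]
      mult_mat_vec_zero[OF carrier_parts(1)] by simp
  also have "\<dots> = E i *\<^sub>v eigvec j"
    using E_mult_eigvec[OF i j] sign_mat_square w(1) by simp
  finally show "(sign_mat * E (neg_index i) * sign_mat) *\<^sub>v eigvec j = E i *\<^sub>v eigvec j" .
qed (use neg_index in simp_all)


lemma A_mult_parts:
  assumes v: "v \<in> carrier_vec (Suc d)" and eig: "A *\<^sub>v v = t \<cdot>\<^sub>v v"
  shows "A *\<^sub>v (even_part *\<^sub>v v) = t \<cdot>\<^sub>v (odd_part *\<^sub>v v)"
    and "A *\<^sub>v (odd_part *\<^sub>v v) = t \<cdot>\<^sub>v (even_part *\<^sub>v v)"
proof -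
  have "A *\<^sub>v (even_part *\<^sub>v v) = odd_part *\<^sub>v (A *\<^sub>v v)"
    using assoc_mult_mat_vec[OF carrier_A carrier_parts(2) v] assoc_mult_mat_vec[OF carrier_parts(3) carrier_A v]
    by (simp add: A_even_part)
  then show "A *\<^sub>v (even_part *\<^sub>v v) = t \<cdot>\<^sub>v (odd_part *\<^sub>v v)"
    unfolding eig by (simp add: mult_mat_vec[OF carrier_parts(3) v])
  have "A *\<^sub>v (odd_part *\<^sub>v v) = even_part *\<^sub>v (A *\<^sub>v v)"
    using assoc_mult_mat_vec[OF carrier_A carrier_parts(3) v] assoc_mult_mat_vec[OF carrier_parts(2) carrier_A v]
    by (simp add: A_odd_part)
  then show "A *\<^sub>v (odd_part *\<^sub>v v) = t \<cdot>\<^sub>v (even_part *\<^sub>v v)"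
    unfolding eig by (simp add: mult_mat_vec[OF carrier_parts(2) v])
qed

text \<open>In characteristic two \<open>A\<^sup>2\<close> still has distinct eigenvalues \<open>\<theta>\<^sub>k\<^sup>2\<close>, and it preserves the even
  and odd parts of every eigenvector of \<open>A\<close>; as \<open>A\<close> swaps these parts, all \<open>\<theta>\<^sub>k\<close> vanish.\<close>
lemma th_zero_if_char_two:
  assumes two: "(2::'a) = 0" and j: "j \<le> d"
  shows "th j = 0"
proof -
  note v = eigvec[OF j]
  define x z where "x = even_part *\<^sub>v eigvec j" and "z = odd_part *\<^sub>v eigvec j"
  have x: "x \<in> carrier_vec (Suc d)" and z: "z \<in> carrier_vec (Suc d)"
    unfolding x_def z_def using mult_mat_vec_carrier[OF carrier_parts(2) v(1)]
      mult_mat_vec_carrier[OF carrier_parts(3) v(1)] by simp_all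
  have Ax: "A *\<^sub>v x = th j \<cdot>\<^sub>v z" and Az: "A *\<^sub>v z = th j \<cdot>\<^sub>v x"
    unfolding x_def z_def using A_mult_parts[OF v(1,3)] by simp_all
  have "A *\<^sub>v (A *\<^sub>v x) = (th j * th j) \<cdot>\<^sub>v x"
    unfolding Ax by (simp add: mult_mat_vec[OF carrier_A z] Az smult_smult_assoc)
  then obtain a where x_a: "x = a \<cdot>\<^sub>v eigvec j"
    using eigvec_of_square_eigenvalue[OF x j] th_square_eq_char_two[OF two _ j] by blast
  have "x + z = eigvec j"
    unfolding x_def z_def
    using add_mult_distrib_mat_vec[OF carrier_parts(2,3) v(1)] even_part_add_odd_part v(1) by simp
  show ?thesis
  proof (cases "a = 0")
    case True
    then have "x = 0\<^sub>v (Suc d)" using x_a v(1) by auto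
    then have "z = eigvec j" and "th j \<cdot>\<^sub>v z = 0\<^sub>v (Suc d)"
      using \<open>x + z = eigvec j\<close> z Ax mult_mat_vec_zero[OF carrier_A] by auto
    then show ?thesis using v(1,2) by (intro smult_vec_eq_zero) simp_all
  next
    case False
    have "a \<cdot>\<^sub>v z = odd_part *\<^sub>v x"
      unfolding x_a z_def by (rule mult_mat_vec[OF carrier_parts(3) v(1), symmetric])
    also have "\<dots> = 0\<^sub>v (Suc d)"
      unfolding x_def using assoc_mult_mat_vec[OF carrier_parts(3,2) v(1)] odd_part_even_part
        zero_mat_mult_vec[OF v(1)] by simp
    finally have "z = 0\<^sub>v (Suc d)" using False z smult_vec_eq_zero by blast
    then have "(th j * a) \<cdot>\<^sub>v eigvec j = 0\<^sub>v (Suc d)"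
      using Az x_a mult_mat_vec_zero[OF carrier_A] by (simp add: smult_smult_assoc)
    then have "th j * a = 0" using v(1,2) by (intro smult_vec_eq_zero) simp_all
    then show ?thesis using False by simp
  qed
qed

end

section \<open>Bipartite Leonard systems\<close>

locale bipartite_leonard = bipartite_system d Es A th E
  for d :: nat and Es :: "nat \<Rightarrow> 'a::field mat" and A :: "'a mat" and th :: "nat \<Rightarrow> 'a"
    and E :: "nat \<Rightarrow> 'a mat" +
  fixes ths :: "nat \<Rightarrow> 'a"
  assumes d_pos: "1 \<le> d"
    and leonard: "leonard_system d A E (lin_comb_mat d ths Es) Es"
begin

lemma E_Astar_E_nonzero_iff:
  assumes "i \<le> d" "j \<le> d" "i \<noteq> j"
  shows "E i * lin_comb_mat d ths Es * E j \<noteq> 0\<^sub>m (Suc d) (Suc d) \<longleftrightarrow> \<bar>int i - int j\<bar> = 1"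
proof -
  have "tridiag_wrt d (lin_comb_mat d ths Es) E" using leonard unfolding leonard_system_def by blast
  then have "(1 < \<bar>int i - int j\<bar> \<longrightarrow> E i * lin_comb_mat d ths Es * E j = 0\<^sub>m (d+1) (d+1)) \<and>
      (\<bar>int i - int j\<bar> = 1 \<longrightarrow> E i * lin_comb_mat d ths Es * E j \<noteq> 0\<^sub>m (d+1) (d+1))"
    using assms(1,2) unfolding tridiag_wrt_def by blast
  moreover have "\<bar>int i - int j\<bar> = 1 \<or> 1 < \<bar>int i - int j\<bar>" using assms(3) by linarith
  ultimately show ?thesis by auto
qed

lemma sign_mat_Astar_sign_mat: "sign_mat * lin_comb_mat d ths Es * sign_mat = lin_comb_mat d ths Es"
proof -
  have "(-1) ^ k * ths k * (-1) ^ k = ((-1) ^ k * (-1) ^ k) * ths k" for k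
    by (simp only: ac_simps)
  then have "(\<lambda>k. (-1) ^ k * ths k * (-1) ^ k) = ths"
    by (intro ext) (simp add: power_mult_distrib[symmetric])
  then show ?thesis unfolding sign_mat_def lin_comb_mat_mult by simp
qed

lemma E_Astar_E_neg_index:
  assumes i: "i \<le> d" and j: "j \<le> d"
  shows "E i * lin_comb_mat d ths Es * E j
    = sign_mat * (E (neg_index i) * lin_comb_mat d ths Es * E (neg_index j)) * sign_mat"
proof -
  have ni: "neg_index i \<le> d" and nj: "neg_index j \<le> d" using neg_index i j by simp_all
  let ?D = sign_mat and ?X = "lin_comb_mat d ths Es"
  have "E i * ?X * E j = (?D * E (neg_index i) * ?D) * ?X * (?D * E (neg_index j) * ?D)"
    using sign_mat_E_sign_mat i j by simp
  also have "\<dots> = ?D * E (neg_index i) * (?D * ?X * ?D) * E (neg_index j) * ?D"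
    using ni nj by (simp add: assoc_mult_square_mat[of _ "Suc d"])
  also have "\<dots> = ?D * (E (neg_index i) * ?X * E (neg_index j)) * ?D"
    using ni nj by (simp add: sign_mat_Astar_sign_mat assoc_mult_square_mat[of _ "Suc d"])
  finally show ?thesis .
qed

lemma sign_mat_sandwich_eq_zero:
  assumes X: "X \<in> carrier_mat (Suc d) (Suc d)"
  shows "sign_mat * X * sign_mat = 0\<^sub>m (Suc d) (Suc d) \<longleftrightarrow> X = 0\<^sub>m (Suc d) (Suc d)"
proof
  assume zero: "sign_mat * X * sign_mat = 0\<^sub>m (Suc d) (Suc d)"
  have "X = (sign_mat * sign_mat) * X * (sign_mat * sign_mat)"
    using X by (simp add: sign_mat_square)
  also have "\<dots> = sign_mat * (sign_mat * X * sign_mat) * sign_mat"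
    using X by (simp add: assoc_mult_square_mat[of _ "Suc d"])
  finally show "X = 0\<^sub>m (Suc d) (Suc d)"
    unfolding zero by (simp add: right_mult_zero_mat[OF carrier_parts(1)] left_mult_zero_mat[OF carrier_parts(1)])
qed (simp add: right_mult_zero_mat[OF carrier_parts(1)] left_mult_zero_mat[OF carrier_parts(1)])

lemma neg_index_adjacent:
  assumes i: "i \<le> d" and j: "j \<le> d"
  shows "\<bar>int (neg_index i) - int (neg_index j)\<bar> = 1 \<longleftrightarrow> \<bar>int i - int j\<bar> = 1"
proof (cases "i = j")
  case False
  have ni: "neg_index i \<le> d" and nj: "neg_index j \<le> d" using neg_index i j by simp_all
  have "neg_index i \<noteq> neg_index j" using neg_index_inj i j False by blast
  then have "\<bar>int (neg_index i) - int (neg_index j)\<bar> = 1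
      \<longleftrightarrow> E (neg_index i) * lin_comb_mat d ths Es * E (neg_index j) \<noteq> 0\<^sub>m (Suc d) (Suc d)"
    using E_Astar_E_nonzero_iff ni nj by simp
  also have "\<dots> \<longleftrightarrow> E i * lin_comb_mat d ths Es * E j \<noteq> 0\<^sub>m (Suc d) (Suc d)"
    using ni nj by (simp add: E_Astar_E_neg_index[OF i j] sign_mat_sandwich_eq_zero)
  also have "\<dots> \<longleftrightarrow> \<bar>int i - int j\<bar> = 1" using E_Astar_E_nonzero_iff i j False by simp
  finally show ?thesis .
qed simp

lemma two_neq_zero: "(2::'a) \<noteq> 0"
proof
  assume "(2::'a) = 0"
  then have "th 0 = th 1" using th_zero_if_char_two d_pos by simp
  then show False using th_eq_iff[of 0 1] d_pos by simp
qed

lemma eq_neg_self_iff: "(x::'a) = - x \<longleftrightarrow> x = 0"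
proof
  assume "x = - x"
  then have "2 * x = 0" by (metis add.right_inverse mult_2)
  then show "x = 0" using two_neq_zero by simp
qed simp

lemma neg_index_reverse: "i \<le> d \<Longrightarrow> neg_index i = d - i"
proof -
  have "(\<forall>i\<le>d. neg_index i = i) \<or> (\<forall>i\<le>d. neg_index i = d - i)"
  proof (rule path_automorphism)
    show "inj_on neg_index {..d}" using neg_index_inj by (auto intro: inj_onI)
  qed (use neg_index neg_index_adjacent in simp_all)
  moreover have "\<not> (\<forall>i\<le>d. neg_index i = i)"
  proof
    assume "\<forall>i\<le>d. neg_index i = i"
    then have "th k = - th k" if "k \<le> d" for k using neg_index[OF that] that by simp
    then have "th 0 = 0" "th 1 = 0" using d_pos eq_neg_self_iff by simp_all
    then show False using th_eq_iff[of 0 1] d_pos by simp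
  qed
  ultimately show "i \<le> d \<Longrightarrow> neg_index i = d - i" by blast
qed

lemma th_reverse: "i \<le> d \<Longrightarrow> th (d - i) = - th i"
  using neg_index[of i] neg_index_reverse[of i] by simp

lemma th_eq_zero_iff:
  assumes i: "i \<le> d"
  shows "th i = 0 \<longleftrightarrow> even d \<and> i = d div 2"
proof
  assume "th i = 0"
  then have "th (d - i) = th i" using th_reverse[OF i] by simp
  then have "d - i = i" using th_eq_iff i by simp
  then show "even d \<and> i = d div 2" by presburger
next
  assume "even d \<and> i = d div 2"
  then have "d - i = i" by presburger
  then have "th i = - th i" using th_reverse[OF i] by simp
  then show "th i = 0" using eq_neg_self_iff by simp
qed

end

theorem corollary11p3:
  fixes d :: nat and A :: "'a::field mat" and E Es :: "nat \<Rightarrow> 'a mat"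
    and th ths :: "nat \<Rightarrow> 'a"
  assumes "d \<ge> 1"
    and "orth_idempotent_system d Es"
    and "tridiag_wrt d A Es"
    and "mult_free_with d A th E"
    and "bipartite d A Es"
    and "leonard_system d A E (lin_comb_mat d ths Es) Es"
    and "i \<le> d"
  shows "th i = 0 \<longleftrightarrow> (even d \<and> i = d div 2)"
proof -
  interpret bipartite_leonard d Es A th E ths
    using assms(1-6) by unfold_locales (simp_all add: orth_idempotents_def mult_free_def)
  show ?thesis by (rule th_eq_zero_iff[OF assms(7)])
qed

end
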